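(* The set $\{\psi(n)/V(n) : n\ge1\}$ is dense in the interval $(1,+\infty)$; that is, every nonempty open subinterval of $(1,+\infty)$ contains an element of this set.
   Context: For a positive integer $n$, an integer $a$ is called regular modulo $n$ if there exists an integer $x$ with $a^2x\equiv a \pmod n$. Let $V(n)$ denote the number of integers $a$ with $1\le a\le n$ that are regular modulo $n$. (Known fact: $V$ is multiplicative, $V(1)=1$, and $V(p^{\alpha})=p^{\alpha}-p^{\alpha-1}+1$ for a prime $p$ and $\alpha\ge1$.) $\psi$ denotes the Dedekind function, $\psi(n)=n\prod_{p\mid n}(1+1/p)$, the product over primes $p$ dividing $n$. *)

theory Defs
  imports "HOL-Computational_Algebra.Primes" "HOL-Number_Theory.Cong" Complex_Main
begin

definition regular_mod :: "nat \<Rightarrow> int \<Rightarrow> bool" where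
  "regular_mod n a \<longleftrightarrow> (\<exists>x::int. [a^2 * x = a] (mod int n))"

definition V :: "nat \<Rightarrow> nat" where
  "V n = card {a::int. 1 \<le> a \<and> a \<le> int n \<and> regular_mod n a}"

definition dedekind_psi :: "nat \<Rightarrow> real" where
  "dedekind_psi n = real n * (\<Prod>p\<in>prime_factors n. (1 + 1 / real p))"

end

theory Submission
  imports Defs "HOL-Number_Theory.Residues" "HOL-Analysis.Harmonic_Numbers"
begin

text \<open>
  If \<open>n\<close> is a product of distinct primes, every residue is regular modulo \<open>n\<close>
  (Fermat: \<open>a\<^sup>k\<^sup>+\<^sup>1 \<equiv> a\<close> whenever \<open>p - 1\<close> divides \<open>k\<close> for all \<open>p | n\<close>), so
  \<open>V(n) = n\<close> and \<open>\<psi>(n)/V(n) = \<Prod>\<^sub>p\<^sub>|\<^sub>n (1 + 1/p)\<close>. Over the primes in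
  \<open>(P, m]\<close> this product tends to infinity as \<open>m \<rightarrow> \<infinity>\<close>, because the square of
  the product over all primes \<open>\<le> N\<close> dominates the Euler product
  \<open>\<Prod>\<^sub>p\<^sub>\<le>\<^sub>N 1/(1 - 1/p) \<ge> H\<^sub>N\<close>; and each step multiplies it by at most
  \<open>1 + 1/P\<close>. Choosing \<open>P\<close> large, the first value exceeding \<open>a\<close> lies below \<open>b\<close>.
\<close>

lemma multiplicity_le_self:
  fixes p n :: nat
  assumes "prime p" "n > 0"
  shows "multiplicity p n \<le> n"
proof -
  have "multiplicity p n < 2 ^ multiplicity p n" by (rule less_exp)
  also have "\<dots> \<le> p ^ multiplicity p n"
    using prime_ge_2_nat[OF assms(1)] by (simp add: power_mono)
  also have "\<dots> \<le> n"
    using assms(2) by (intro dvd_imp_le multiplicity_dvd)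
  finally show ?thesis by simp
qed

lemma prod_multiplicity_superset:
  fixes n :: nat
  assumes "finite P" "\<And>p. p \<in> P \<Longrightarrow> prime p" "prime_factors n \<subseteq> P" "n > 0"
  shows "(\<Prod>p\<in>P. p ^ multiplicity p n) = n"
proof -
  have "(\<Prod>p\<in>P. p ^ multiplicity p n) = (\<Prod>p\<in>prime_factors n. p ^ multiplicity p n)"
    using assms by (intro prod.mono_neutral_right) (auto simp: prime_factors_multiplicity)
  also have "\<dots> = n" using assms(4) by (simp add: prod_prime_factors)
  finally show ?thesis .
qed

lemma sum_power_le_square_one_plus:
  fixes x :: real
  assumes "0 \<le> x" "x \<le> 1 / 2"
  shows "(\<Sum>k\<le>N. x ^ k) \<le> (1 + x) ^ 2"
proof -
  have "(\<Sum>k\<le>N. x ^ k) = (\<Sum>k<Suc N. x ^ k)"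
    by (simp add: lessThan_Suc_atMost)
  also have "\<dots> = (1 - x ^ Suc N) / (1 - x)"
    using assms by (subst sum_gp_strict) simp
  also have "\<dots> \<le> 1 / (1 - x)"
    using assms by (intro divide_right_mono) auto
  also have "\<dots> \<le> (1 + x) ^ 2"
  proof -
    have "x * x \<le> x / 2" using mult_left_mono[OF assms(2,1)] by simp
    then have "0 \<le> x * (1 - x - x * x)"
      using assms by (intro mult_nonneg_nonneg) simp_all
    then have "1 \<le> (1 + x) ^ 2 * (1 - x)"
      by (simp add: algebra_simps power2_eq_square)
    then show ?thesis using assms by (simp add: field_simps)
  qed
  finally show ?thesis .
qed

text \<open>
  Each \<open>n \<le> N\<close> is determined by its exponent vector over the primes \<open>\<le> N\<close>,
  and its exponents are \<open>\<le> N\<close>; so \<open>H\<^sub>N\<close> is a partial sum of the expanded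
  product \<open>\<Prod>\<^sub>p \<Sum>\<^sub>k\<^sub>\<le>\<^sub>N p\<^sup>-\<^sup>k\<close>.
\<close>
lemma harm_le_prod_primes:
  "harm N \<le> (\<Prod>p | prime p \<and> p \<le> N. (1 + 1 / real p) ^ 2)"
proof -
  define P where "P = {p. prime p \<and> p \<le> N}"
  define e where "e = (\<lambda>n. restrict (\<lambda>p. multiplicity p n) P)"
  have finP: "finite P" and primeP: "\<And>p. p \<in> P \<Longrightarrow> prime p" by (auto simp: P_def)
  have factor: "(\<Prod>p\<in>P. p ^ e n p) = n" if "n \<in> {1..N}" for n
    using that unfolding e_def
    by (subst (2) prod_multiplicity_superset[OF finP primeP, of n, symmetric])
       (auto simp: P_def intro: order.trans[OF dvd_imp_le] dest: in_prime_factors_imp_prime in_prime_factors_imp_dvd)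
  have "harm N = (\<Sum>n\<in>{1..N}. \<Prod>p\<in>P. (1 / real p) ^ e n p)"
  proof (unfold harm_def, rule sum.cong[OF refl])
    fix n assume "n \<in> {1..N}"
    then have "real n = (\<Prod>p\<in>P. real p ^ e n p)"
      by (subst factor[symmetric]) simp_all
    then show "inverse (real n) = (\<Prod>p\<in>P. (1 / real p) ^ e n p)"
      by (simp add: power_one_over prod_dividef inverse_eq_divide)
  qed
  also have "\<dots> = (\<Sum>g\<in>e ` {1..N}. \<Prod>p\<in>P. (1 / real p) ^ g p)"
  proof (rule sum.reindex[symmetric, unfolded comp_def])
    show "inj_on e {1..N}"
      by (rule inj_on_inverseI[where g = "\<lambda>g. \<Prod>p\<in>P. p ^ g p"]) (rule factor)
  qed
  also have "\<dots> \<le> (\<Sum>g\<in>PiE P (\<lambda>_. {..N}). \<Prod>p\<in>P. (1 / real p) ^ g p)"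
  proof (rule sum_mono2)
    show "e ` {1..N} \<subseteq> PiE P (\<lambda>_. {..N})"
    proof
      fix g assume "g \<in> e ` {1..N}"
      then obtain n where n: "n \<in> {1..N}" "g = e n" by blast
      have "multiplicity p n \<le> N" if "p \<in> P" for p
        using multiplicity_le_self[OF primeP[OF that], of n] n by simp
      then show "g \<in> PiE P (\<lambda>_. {..N})" using n by (simp add: e_def)
    qed
  qed (simp_all add: finP finite_PiE prod_nonneg)
  also have "\<dots> = (\<Prod>p\<in>P. \<Sum>k\<le>N. (1 / real p) ^ k)"
    using finP by (rule prod_sum_PiE[symmetric]) simp
  also have "\<dots> \<le> (\<Prod>p\<in>P. (1 + 1 / real p) ^ 2)"
  proof (rule prod_mono)
    fix p assume "p \<in> P"
    then have "real p \<ge> 2" using prime_ge_2_nat primeP by simp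
    then show "0 \<le> (\<Sum>k\<le>N. (1 / real p) ^ k) \<and> (\<Sum>k\<le>N. (1 / real p) ^ k) \<le> (1 + 1 / real p) ^ 2"
      by (simp add: sum_nonneg sum_power_le_square_one_plus)
  qed
  finally show ?thesis by (simp add: P_def)
qed

lemma prod_primes_one_plus_inverse_unbounded:
  "\<exists>N. B \<le> (\<Prod>p | prime p \<and> p \<le> N. 1 + 1 / real p)"
proof -
  obtain N where N: "B\<^sup>2 \<le> harm N"
    using harm_at_top by (auto simp: filterlim_at_top eventually_sequentially)
  also have "harm N \<le> (\<Prod>p | prime p \<and> p \<le> N. 1 + 1 / real p)\<^sup>2"
    using harm_le_prod_primes[of N] by (simp only: prod_power_distrib)
  finally have "B\<^sup>2 \<le> (\<Prod>p | prime p \<and> p \<le> N. 1 + 1 / real p)\<^sup>2" .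
  moreover have "0 \<le> (\<Prod>p | prime p \<and> p \<le> N. 1 + 1 / real p)"
    by (rule prod_nonneg) simp
  ultimately show ?thesis by (blast intro: power2_le_imp_le)
qed

lemma prod_primes_between_one_plus_inverse_unbounded:
  "\<exists>N. B \<le> (\<Prod>p | prime p \<and> M < p \<and> p \<le> N. 1 + 1 / real p)"
proof -
  define f where "f p = 1 + 1 / real p" for p :: nat
  define C where "C = (\<Prod>p | prime p \<and> p \<le> M. f p)"
  have f_ge_1: "1 \<le> f p" for p by (simp add: f_def)
  have "C \<ge> 1" unfolding C_def by (intro prod_ge_1 f_ge_1)
  obtain N where N: "B * C \<le> (\<Prod>p | prime p \<and> p \<le> N. f p)"
    using prod_primes_one_plus_inverse_unbounded unfolding f_def by blast
  let ?Q = "{p. prime p \<and> M < p \<and> p \<le> N}"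
  have "(\<Prod>p | prime p \<and> p \<le> N. f p) \<le> prod f ({p. prime p \<and> p \<le> M} \<union> ?Q)"
    by (intro prod_mono2) (auto intro: f_ge_1 order.trans[OF zero_le_one f_ge_1])
  also have "\<dots> = C * prod f ?Q"
    unfolding C_def by (intro prod.union_disjoint) auto
  finally have "B * C \<le> C * prod f ?Q" using N by linarith
  with \<open>C \<ge> 1\<close> have "B \<le> prod f ?Q" by (simp add: mult.commute)
  then show ?thesis unfolding f_def by blast
qed

lemma prod_primes_between_Suc_le:
  assumes "M > 0"
  shows "(\<Prod>p | prime p \<and> M < p \<and> p \<le> Suc m. 1 + 1 / real p)
           \<le> (1 + 1 / real M) * (\<Prod>p | prime p \<and> M < p \<and> p \<le> m. 1 + 1 / real p)"
    (is "?g (Suc m) \<le> _ * ?g m")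
proof -
  have g_nonneg: "0 \<le> ?g m" by (intro prod_nonneg) (simp add: add_nonneg_nonneg)
  show ?thesis
  proof (cases "prime (Suc m) \<and> M < Suc m")
    case True
    then have "{p. prime p \<and> M < p \<and> p \<le> Suc m} = insert (Suc m) {p. prime p \<and> M < p \<and> p \<le> m}"
      by (auto simp: le_Suc_eq)
    then have "?g (Suc m) = (1 + 1 / real (Suc m)) * ?g m" by simp
    also have "\<dots> \<le> (1 + 1 / real M) * ?g m"
      using True assms g_nonneg by (intro mult_right_mono) (simp_all add: frac_le)
    finally show ?thesis .
  next
    case False
    then have "{p. prime p \<and> M < p \<and> p \<le> Suc m} = {p. prime p \<and> M < p \<and> p \<le> m}"
      by (auto simp: le_Suc_eq)
    then show ?thesis using g_nonneg by (simp add: mult_le_cancel_right1)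
  qed
qed

lemma exists_between_if_small_steps:
  fixes g :: "nat \<Rightarrow> 'a::linorder"
  assumes "g 0 \<le> a" "a < g N" "\<And>m. g m \<le> a \<Longrightarrow> g (Suc m) < b"
  shows "\<exists>m. a < g m \<and> g m < b"
proof -
  define m where "m = (LEAST m. a < g m)"
  have "a < g m" unfolding m_def using assms(2) by (rule LeastI)
  moreover from this assms(1) obtain k where k: "m = Suc k" by (cases m) auto
  have "\<not> a < g k" unfolding m_def by (rule not_less_Least) (simp add: m_def[symmetric] k)
  then have "g m < b" using assms(3) k by simp
  ultimately show ?thesis by blast
qed

lemma cong_power_Suc_self_prime:
  fixes a k p :: nat
  assumes "prime p" "(p - 1) dvd k"
  shows "[a ^ Suc k = a] (mod p)"
proof (cases "p dvd a")
  case True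
  then show ?thesis by (simp add: cong_def)
next
  case False
  from assms(2) obtain j where j: "k = (p - 1) * j" by (elim dvdE)
  have "[a ^ (p - 1) = 1] (mod p)" using assms(1) False by (rule fermat_theorem)
  then have "[a * (a ^ (p - 1)) ^ j = a * 1 ^ j] (mod p)" by (intro cong_mult cong_pow) simp_all
  moreover have "a ^ Suc k = a * (a ^ (p - 1)) ^ j" by (simp add: j power_mult)
  ultimately show ?thesis by (simp only: power_one mult_1_right)
qed

lemma cong_power_Suc_self_prod_primes:
  fixes a k :: nat
  assumes "finite S" "\<And>p. p \<in> S \<Longrightarrow> prime p" "\<And>p. p \<in> S \<Longrightarrow> (p - 1) dvd k"
  shows "[a ^ Suc k = a] (mod \<Prod>S)"
  using assms by (intro coprime_cong_prod_nat primes_coprime cong_power_Suc_self_prime) auto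

lemma regular_mod_prod_primes:
  assumes "finite S" "\<And>p. p \<in> S \<Longrightarrow> prime p"
  shows "regular_mod (\<Prod>S) (int a)"
proof -
  define k where "k = (\<Prod>p\<in>S. p - 1)"
  have "k \<ge> 1" unfolding k_def
  proof (rule prod_ge_1)
    fix p assume "p \<in> S"
    then have "p \<ge> 2" using assms(2) prime_ge_2_nat by blast
    then show "1 \<le> p - 1" by simp
  qed
  have "[a ^ Suc k = a] (mod \<Prod>S)"
    using assms unfolding k_def by (intro cong_power_Suc_self_prod_primes dvd_prodI)
  then have "[int a ^ Suc k = int a] (mod int (\<Prod>S))"
    by (simp only: cong_int_iff of_nat_power[symmetric])
  moreover have "int a ^ Suc k = int a ^ 2 * int a ^ (k - 1)"
    using \<open>k \<ge> 1\<close> by (simp only: power_add[symmetric]) simp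
  ultimately show ?thesis unfolding regular_mod_def by metis
qed

lemma V_prod_primes:
  assumes "finite S" "\<And>p. p \<in> S \<Longrightarrow> prime p"
  shows "V (\<Prod>S) = \<Prod>S"
proof -
  have "regular_mod (\<Prod>S) a" if "a \<ge> 0" for a
    using regular_mod_prod_primes[OF assms, of "nat a"] that by simp
  then have "{a. 1 \<le> a \<and> a \<le> int (\<Prod>S) \<and> regular_mod (\<Prod>S) a} = {1..int (\<Prod>S)}"
    by auto
  then show ?thesis unfolding V_def by (simp del: of_nat_prod)
qed

lemma prime_factors_prod_primes:
  assumes "finite S" "\<And>p. p \<in> S \<Longrightarrow> prime p"
  shows "prime_factors (\<Prod>S) = S"
proof -
  have "0 \<notin> S" using assms(2) by fastforce
  then show ?thesis using assms by (subst prime_factors_prod) (auto simp: prime_prime_factors)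
qed

lemma dedekind_psi_div_V_prod_primes:
  assumes "finite S" "\<And>p. p \<in> S \<Longrightarrow> prime p"
  shows "dedekind_psi (\<Prod>S) / real (V (\<Prod>S)) = (\<Prod>p\<in>S. 1 + 1 / real p)"
proof -
  have "0 \<notin> S" using assms(2) by fastforce
  then have "\<Prod>S > 0" by (intro prod_pos) (auto intro: gr0I)
  then show ?thesis
    using \<open>0 \<notin> S\<close>
    by (simp add: dedekind_psi_def V_prod_primes prime_factors_prod_primes assms)
qed

theorem proposition4:
  fixes a b :: real
  assumes "1 \<le> a" and "a < b"
  shows "\<exists>n::nat. n \<ge> 1 \<and> a < dedekind_psi n / real (V n) \<and> dedekind_psi n / real (V n) < b"
proof -
  obtain M :: nat where M: "a < real M * (b - a)"
    using ex_less_of_nat_mult[of "b - a"] assms(2) by auto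
  with assms have "M > 0" by (cases M) auto
  with M have small_step: "a / real M < b - a" by (simp add: divide_less_eq mult.commute)
  define Q where "Q m = {p. prime p \<and> M < p \<and> p \<le> m}" for m
  define g where "g m = (\<Prod>p\<in>Q m. 1 + 1 / real p)" for m
  have "g 0 \<le> a" using assms(1) by (simp add: g_def Q_def)
  obtain N where "b \<le> g N"
    using prod_primes_between_one_plus_inverse_unbounded unfolding g_def Q_def by blast
  have "g (Suc m) < b" if "g m \<le> a" for m
  proof -
    have "g (Suc m) \<le> (1 + 1 / real M) * g m"
      using prod_primes_between_Suc_le[OF \<open>M > 0\<close>] by (simp add: g_def Q_def)
    also have "\<dots> = g m + g m / real M" by (simp add: distrib_right)
    also have "\<dots> \<le> a + a / real M"
      using that by (intro add_mono divide_right_mono) simp_all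
    also have "\<dots> < b" using small_step by linarith
    finally show ?thesis .
  qed
  with \<open>g 0 \<le> a\<close> \<open>b \<le> g N\<close> assms(2) obtain m where "a < g m" "g m < b"
    using exists_between_if_small_steps[of g a N b] by force
  moreover have "finite (Q m)" "\<And>p. p \<in> Q m \<Longrightarrow> prime p" by (auto simp: Q_def)
  moreover from this have "\<Prod>(Q m) \<ge> 1" by (simp add: Suc_leI prod_pos prime_gt_0_nat)
  ultimately show ?thesis
    by (intro exI[of _ "\<Prod>(Q m)"]) (simp add: dedekind_psi_div_V_prod_primes g_def)
qed

end
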